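(* Let $\mathbf{A}\in\mathbb{R}^{n\times d}$, $\mathbf{B}\in\mathbb{R}^{n\times d_B}$, $\mathbf{C}\in\mathbb{R}^{n_C\times d}$, and let $k\in[d_B]$, $r\in[n_C]$. Then $$P_{k,r}(x;\mathbf{A},\mathbf{B},\mathbf{C})=x^{d-n}\,P_{r,k}(x;\mathbf{A}^{\rm T},\mathbf{C}^{\rm T},\mathbf{B}^{\rm T}).$$
   Context: For a matrix $\mathbf{M}$, $\mathbf{M}_{R,S}$ is the submatrix with rows $R$, columns $S$; $\mathbf{M}_{:,S}$, $\mathbf{M}_{R,:}$ keep all rows, resp. columns; $\mathbf{M}^\dagger$ is the Moore–Penrose pseudoinverse, $\mathbf{M}_{R,S}^\dagger:=(\mathbf{M}_{R,S})^\dagger$; empty determinants equal $1$ and $\mathbf{M}_{:,\emptyset}\mathbf{M}_{:,\emptyset}^\dagger$, $\mathbf{M}_{\emptyset,:}^\dagger\mathbf{M}_{\emptyset,:}$ are zero matrices. For general $\mathbf{A}\in\mathbb{R}^{n\times d}$, $\mathbf{B}\in\mathbb{R}^{n\times d_B}$, $\mathbf{C}\in\mathbb{R}^{n_C\times d}$, $S\subset[d_B]$, $R\subset[n_C]$: $\mathbf{Q}_S=\mathbf{I}_n-\mathbf{B}_{:,S}\mathbf{B}_{:,S}^\dagger$, $\mathbf{P}_R=\mathbf{I}_d-\mathbf{C}_{R,:}^\dagger\mathbf{C}_{R,:}$, $p_{S,R}(x;\mathbf{A},\mathbf{B},\mathbf{C})=\det[x\mathbf{I}_d-(\mathbf{Q}_S\mathbf{A}\mathbf{P}_R)^{\rm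 T}(\mathbf{Q}_S\mathbf{A}\mathbf{P}_R)]$, and $P_{k,r}(x;\mathbf{A},\mathbf{B},\mathbf{C})=\sum_{R\subset[n_C],|R|=r}\sum_{S\subset[d_B],|S|=k}\det[\mathbf{C}_{R,:}\mathbf{C}_{R,:}^{\rm T}]\det[\mathbf{B}_{:,S}^{\rm T}\mathbf{B}_{:,S}]\,p_{S,R}(x;\mathbf{A},\mathbf{B},\mathbf{C})$. (For $P_{r,k}(x;\mathbf{A}^{\rm T},\mathbf{C}^{\rm T},\mathbf{B}^{\rm T})$ the same definition is applied with the roles $\mathbf{A}\to\mathbf{A}^{\rm T}\in\mathbb{R}^{d\times n}$, $\mathbf{B}\to\mathbf{C}^{\rm T}$, $\mathbf{C}\to\mathbf{B}^{\rm T}$.) *)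

theory Defs
  imports "Jordan_Normal_Form.DL_Submatrix" "Jordan_Normal_Form.Determinant"
begin

definition pinv :: "real mat \<Rightarrow> real mat" where
  "pinv M = (THE X. X \<in> carrier_mat (dim_col M) (dim_row M) \<and>
      M * X * M = M \<and> X * M * X = X \<and>
      transpose_mat (M * X) = M * X \<and> transpose_mat (X * M) = X * M)"

(* Q_S = I_n - B_{:,S} B_{:,S}^dagger   (indices are 0-based) *)
definition Qproj :: "real mat \<Rightarrow> nat set \<Rightarrow> real mat" where
  "Qproj B S = (let BS = submatrix B {0..<dim_row B} S in
      1\<^sub>m (dim_row B) - BS * pinv BS)"

definition Pproj :: "real mat \<Rightarrow> nat set \<Rightarrow> real mat" where
  "Pproj C R = (let CR = submatrix C R {0..<dim_col C} in
      1\<^sub>m (dim_col C) - pinv CR * CR)"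

definition pSR :: "nat set \<Rightarrow> nat set \<Rightarrow> real \<Rightarrow> real mat \<Rightarrow> real mat \<Rightarrow> real mat \<Rightarrow> real" where
  "pSR S R x A B C = (let M = Qproj B S * A * Pproj C R in
      det (x \<cdot>\<^sub>m 1\<^sub>m (dim_col A) - transpose_mat M * M))"

definition Pkr :: "nat \<Rightarrow> nat \<Rightarrow> real \<Rightarrow> real mat \<Rightarrow> real mat \<Rightarrow> real mat \<Rightarrow> real" where
  "Pkr k r x A B C =
     (\<Sum>R\<in>{R. R \<subseteq> {0..<dim_row C} \<and> card R = r}.
       \<Sum>S\<in>{S. S \<subseteq> {0..<dim_col B} \<and> card S = k}.
         det (submatrix C R {0..<dim_col C} * transpose_mat (submatrix C R {0..<dim_col C}))
       * det (transpose_mat (submatrix B {0..<dim_row B} S) * submatrix B {0..<dim_row B} S)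
       * pSR S R x A B C)"

end

theory Submission
  imports Defs
begin

(* Write M = Q_S A P_R. The pseudoinverse commutes with transposition, so the projections built
   from C^T and B^T are P_R^T and Q_S^T; hence p_{R,S}(x; A^T, C^T, B^T) = det(x I_n - M M^T)
   and p_{S,R}(x; A, B, C) = det(x I_d - M^T M), and the two double sums carry the same weights.
   Sylvester's identity det(x I_d - N M) = x^(d-n) det(x I_n - M N) relates the summands.
   Because pinv is a definite description, the existence of the Moore-Penrose inverse has to be
   shown: for a least-squares inverse Z of M, MZ is the orthogonal projector onto the column
   space of M, which is built one column at a time as in Gram-Schmidt, and Urquhart's formula
   combines least-squares inverses of M and M^T into the Moore-Penrose inverse. *)

section \<open>Sylvester's determinant identity\<close>

lemma det_one_minus_mult_commute:
  fixes M :: "'a :: idom mat"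
  assumes M: "M \<in> carrier_mat n d" and N: "N \<in> carrier_mat d n"
  shows "det (1\<^sub>m d - N * M) = det (1\<^sub>m n - M * N)"
proof -
  define K where "K = four_block_mat (1\<^sub>m n) M N (1\<^sub>m d)"
  define L where "L = four_block_mat (1\<^sub>m n) (0\<^sub>m n d) (- N) (1\<^sub>m d)"
  have K: "K \<in> carrier_mat (n + d) (n + d)" and L: "L \<in> carrier_mat (n + d) (n + d)"
    using M N by (auto simp: K_def L_def)
  have det_L: "det L = 1"
    unfolding L_def using N by (subst det_four_block_mat_upper_right_zero[of _ n _ d]) auto
  have LK: "L * K = four_block_mat (1\<^sub>m n) M (0\<^sub>m d n) (1\<^sub>m d - N * M)"
    unfolding L_def K_def using M N by (subst mult_four_block_mat[of _ n n _ d _ d]) auto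
  have KL: "K * L = four_block_mat (1\<^sub>m n - M * N) M (0\<^sub>m d n) (1\<^sub>m d)"
    unfolding L_def K_def using M N by (subst mult_four_block_mat[of _ n n _ d _ d]) auto
  have det_LK: "det (L * K) = det (1\<^sub>m d - N * M)"
    unfolding LK using M N by (subst det_four_block_mat_lower_left_zero[of _ n _ d]) auto
  have det_KL: "det (K * L) = det (1\<^sub>m n - M * N)"
    unfolding KL using M N by (subst det_four_block_mat_lower_left_zero[of _ n _ d]) auto
  show ?thesis
    using det_LK det_KL det_mult[OF L K] det_mult[OF K L] by (simp add: det_L)
qed

lemma det_smult_one_minus_mult_commute:
  fixes M :: "'a :: field mat"
  assumes M: "M \<in> carrier_mat n d" and N: "N \<in> carrier_mat d n" and x: "x \<noteq> 0"
  shows "det (x \<cdot>\<^sub>m 1\<^sub>m d - N * M) = x powi (int d - int n) * det (x \<cdot>\<^sub>m 1\<^sub>m n - M * N)"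
proof -
  have scale: "x \<cdot>\<^sub>m 1\<^sub>m m - A = x \<cdot>\<^sub>m (1\<^sub>m m - (1 / x) \<cdot>\<^sub>m A)" if "A \<in> carrier_mat m m" for A m
    using that x by (intro eq_matI) (auto simp: field_simps)
  have "det (x \<cdot>\<^sub>m 1\<^sub>m d - N * M) = x ^ d * det (1\<^sub>m d - ((1 / x) \<cdot>\<^sub>m N) * M)"
    using M N by (simp add: scale mult_smult_assoc_mat)
  also have "\<dots> = x ^ d * det (1\<^sub>m n - M * ((1 / x) \<cdot>\<^sub>m N))"
    using M N by (simp add: det_one_minus_mult_commute[OF M])
  also have "\<dots> = x ^ d / x ^ n * det (x \<cdot>\<^sub>m 1\<^sub>m n - M * N)"
    using M N x by (simp add: scale mult_smult_distrib power_divide)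
  also have "x ^ d / x ^ n = x powi (int d - int n)"
    using x by (simp add: power_int_diff)
  finally show ?thesis .
qed

section \<open>Existence and uniqueness of the Moore-Penrose inverse\<close>

lemma transpose_smult_mat: "transpose_mat (a \<cdot>\<^sub>m A) = a \<cdot>\<^sub>m transpose_mat A"
  by (intro eq_matI) auto

lemma smult_mat_mult_vec:
  assumes "A \<in> carrier_mat n m" and "v \<in> carrier_vec m"
  shows "(a \<cdot>\<^sub>m A) *\<^sub>v v = a \<cdot>\<^sub>v (A *\<^sub>v v)"
  using assms by (intro eq_vecI) (auto simp: scalar_prod_def sum_distrib_left ac_simps)

lemma mult_mat_vec_unit_vec:
  "(A :: 'a :: semiring_1 mat) \<in> carrier_mat n d \<Longrightarrow> k < d \<Longrightarrow> A *\<^sub>v unit_vec d k = col A k"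
  by (intro eq_vecI) auto

lemma transpose_mult_mult:
  fixes A :: "'a :: comm_semiring_0 mat"
  assumes A: "A \<in> carrier_mat n m" and B: "B \<in> carrier_mat m k" and C: "C \<in> carrier_mat k l"
  shows "transpose_mat (A * B * C) = transpose_mat C * transpose_mat B * transpose_mat A"
  unfolding transpose_mult[OF mult_carrier_mat[OF A B] C] transpose_mult[OF A B]
  by (rule assoc_mult_mat[symmetric]) (use A B C in auto)

definition outer_prod :: "'a :: comm_ring_1 vec \<Rightarrow> 'a vec \<Rightarrow> 'a mat" where
  "outer_prod u w = mat (dim_vec u) (dim_vec w) (\<lambda>(i, j). u $ i * w $ j)"

lemma outer_prod_carrier [simp]:
  "u \<in> carrier_vec n \<Longrightarrow> w \<in> carrier_vec m \<Longrightarrow> outer_prod u w \<in> carrier_mat n m"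
  by (simp add: outer_prod_def)

lemma outer_prod_zero_left [simp]: "w \<in> carrier_vec m \<Longrightarrow> outer_prod (0\<^sub>v n) w = 0\<^sub>m n m"
  by (intro eq_matI) (auto simp: outer_prod_def)

lemma outer_prod_smult_left: "outer_prod (a \<cdot>\<^sub>v u) w = a \<cdot>\<^sub>m outer_prod u w"
  by (intro eq_matI) (auto simp: outer_prod_def)

lemma transpose_outer_prod: "transpose_mat (outer_prod u w) = outer_prod w u"
  by (intro eq_matI) (auto simp: outer_prod_def)

lemma mult_outer_prod:
  assumes "A \<in> carrier_mat n m" and "u \<in> carrier_vec m"
  shows "A * outer_prod u w = outer_prod (A *\<^sub>v u) w"
  using assms by (intro eq_matI)
    (auto simp: outer_prod_def scalar_prod_def sum_distrib_left ac_simps)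

lemma outer_prod_mult_vec:
  assumes "w \<in> carrier_vec m" and "v \<in> carrier_vec m"
  shows "outer_prod u w *\<^sub>v v = (w \<bullet> v) \<cdot>\<^sub>v u"
  using assms by (intro eq_vecI)
    (auto simp: outer_prod_def scalar_prod_def sum_distrib_left ac_simps)

lemma projector_rank_one_update:
  fixes P :: "'a :: field mat"
  assumes P: "P \<in> carrier_mat n n" and P_sym: "transpose_mat P = P" and P_idem: "P * P = P"
    and r: "r \<in> carrier_vec n" and Pr: "P *\<^sub>v r = 0\<^sub>v n" and rr: "r \<bullet> r \<noteq> 0"
  defines "P' \<equiv> P + (1 / (r \<bullet> r)) \<cdot>\<^sub>m outer_prod r r"
  shows "transpose_mat P' = P'" and "P' * P' = P'" and "P' *\<^sub>v r = r"
    and "\<And>u. u \<in> carrier_vec n \<Longrightarrow> P *\<^sub>v u = u \<Longrightarrow> P' *\<^sub>v u = u"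
proof -
  define s where "s = 1 / (r \<bullet> r)"
  define R where "R = outer_prod r r"
  have R: "R \<in> carrier_mat n n" using r by (simp add: R_def)
  have P'_eq: "P' = P + s \<cdot>\<^sub>m R" by (simp add: P'_def s_def R_def)
  have P'_vec: "P' *\<^sub>v u = P *\<^sub>v u + (s * (r \<bullet> u)) \<cdot>\<^sub>v r" if u: "u \<in> carrier_vec n" for u
  proof -
    have "R *\<^sub>v u = (r \<bullet> u) \<cdot>\<^sub>v r" unfolding R_def by (rule outer_prod_mult_vec[OF r u])
    then show ?thesis
      using P R u
      by (simp add: P'_eq add_mult_distrib_mat_vec smult_mat_mult_vec[OF R u] smult_smult_assoc)
  qed
  have PR: "P * R = 0\<^sub>m n n" using P r by (simp add: R_def mult_outer_prod Pr)
  have RP: "R * P = 0\<^sub>m n n"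
    using arg_cong[OF PR, of transpose_mat] transpose_mult[OF P R] P_sym
    by (simp add: R_def transpose_outer_prod)
  have RR: "R * R = (r \<bullet> r) \<cdot>\<^sub>m R"
    unfolding R_def mult_outer_prod[OF R[unfolded R_def] r] outer_prod_mult_vec[OF r r]
    by (rule outer_prod_smult_left)
  show "transpose_mat P' = P'"
    using P R
    by (simp add: P'_eq transpose_add transpose_smult_mat P_sym R_def transpose_outer_prod)
  show "P' * P' = P'"
  proof -
    have sR: "s \<cdot>\<^sub>m R \<in> carrier_mat n n" using R by simp
    have "P' * P' = (P * P + P * (s \<cdot>\<^sub>m R)) + (s \<cdot>\<^sub>m R * P + s \<cdot>\<^sub>m R * (s \<cdot>\<^sub>m R))"
      using P sR by (simp add: P'_eq add_mult_distrib_mat[OF P sR add_carrier_mat[OF sR]]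
          mult_add_distrib_mat[OF P P sR] mult_add_distrib_mat[OF sR P sR])
    also have "\<dots> = P + s \<cdot>\<^sub>m (s \<cdot>\<^sub>m ((r \<bullet> r) \<cdot>\<^sub>m R))"
      using P R by (simp add: mult_smult_distrib[OF P R] mult_smult_assoc_mat[OF R P]
          mult_smult_distrib[OF sR R] mult_smult_assoc_mat[OF R R] PR RP RR P_idem)
    also have "s \<cdot>\<^sub>m (s \<cdot>\<^sub>m ((r \<bullet> r) \<cdot>\<^sub>m R)) = s \<cdot>\<^sub>m R"
      using rr by (intro eq_matI) (auto simp: s_def)
    finally show ?thesis by (simp add: P'_eq)
  qed
  show "P' *\<^sub>v r = r" using r rr by (simp add: P'_vec Pr s_def)
  show "P' *\<^sub>v u = u" if u: "u \<in> carrier_vec n" and Pu: "P *\<^sub>v u = u" for u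
  proof -
    have "r \<bullet> u = (transpose_mat P *\<^sub>v r) \<bullet> u"
      using transpose_vec_mult_scalar[OF P u r] Pu by simp
    then have "r \<bullet> u = 0" using P_sym Pr u by simp
    then show ?thesis using u r Pu by (intro eq_vecI) (auto simp: P'_vec)
  qed
qed

lemma column_projector_extend:
  fixes M :: "real mat"
  assumes M: "M \<in> carrier_mat n d" and k: "k < d" and Z: "Z \<in> carrier_mat d n"
    and sym: "transpose_mat (M * Z) = M * Z" and idem: "M * Z * (M * Z) = M * Z"
  obtains Z' where "Z' \<in> carrier_mat d n" and "transpose_mat (M * Z') = M * Z'"
    and "M * Z' * (M * Z') = M * Z'" and "M * Z' *\<^sub>v col M k = col M k"
    and "\<And>u. u \<in> carrier_vec n \<Longrightarrow> M * Z *\<^sub>v u = u \<Longrightarrow> M * Z' *\<^sub>v u = u"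
proof -
  define P where "P = M * Z"
  define v where "v = col M k"
  define r where "r = v - P *\<^sub>v v"
  have P: "P \<in> carrier_mat n n" and v: "v \<in> carrier_vec n" and r: "r \<in> carrier_vec n"
    using M Z k by (auto simp: P_def v_def r_def)
  have Pv: "P *\<^sub>v (P *\<^sub>v v) = P *\<^sub>v v"
    using P v idem by (simp add: P_def[symmetric] assoc_mult_mat_vec[symmetric, OF P P v])
  have v_split: "v = P *\<^sub>v v + r" using P v by (auto simp: r_def intro!: eq_vecI)
  show thesis
  proof (cases "r = 0\<^sub>v n")
    case True
    then have "P *\<^sub>v v = v" using v_split P v by simp
    then show thesis using Z sym idem by (intro that[of Z]) (auto simp: P_def v_def)
  next
    case False
    have rr: "r \<bullet> r \<noteq> 0" using False conjugate_square_eq_0_vec[OF r] by simp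
    have Pr: "P *\<^sub>v r = 0\<^sub>v n"
      using P v Pv by (simp add: r_def mult_minus_distrib_mat_vec[OF P v])
    (* r = M w, so the updated projector is again of the form M Z' *)
    define w where "w = unit_vec d k - Z *\<^sub>v v"
    define Z' where "Z' = Z + (1 / (r \<bullet> r)) \<cdot>\<^sub>m outer_prod w r"
    have w: "w \<in> carrier_vec d" using Z v by (simp add: w_def)
    have Mw: "M *\<^sub>v w = r"
      using M Z v k
      by (simp add: w_def r_def P_def v_def mult_minus_distrib_mat_vec[OF M] mult_mat_vec_unit_vec)
    have MZ': "M * Z' = P + (1 / (r \<bullet> r)) \<cdot>\<^sub>m outer_prod r r"
      using M Z w r by (simp add: Z'_def P_def mult_add_distrib_mat[OF M Z]
          mult_smult_distrib[OF M outer_prod_carrier[OF w r]] mult_outer_prod[OF M w] Mw)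
    note upd =
      projector_rank_one_update[OF P sym[folded P_def] idem[folded P_def] r Pr rr, folded MZ']
    have MZ'_carrier: "M * Z' \<in> carrier_mat n n" using MZ' P r by simp
    have "M * Z' *\<^sub>v v = M * Z' *\<^sub>v (P *\<^sub>v v) + M * Z' *\<^sub>v r"
      using P v r by (subst v_split) (simp add: mult_add_distrib_mat_vec[OF MZ'_carrier])
    also have "\<dots> = v" using P v Pv upd(3,4) v_split by simp
    finally have MZ'v: "M * Z' *\<^sub>v v = v" .
    show thesis
    proof (rule that[of Z'])
      show "Z' \<in> carrier_mat d n" using Z w r by (simp add: Z'_def)
    qed (use upd MZ'v in \<open>auto simp: P_def v_def\<close>)
  qed
qed

lemma lsq_inverse_exists:
  fixes M :: "real mat"
  assumes M: "M \<in> carrier_mat n d"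
  obtains Z where "Z \<in> carrier_mat d n" and "M * Z * M = M" and "transpose_mat (M * Z) = M * Z"
proof -
  have "\<exists>Z \<in> carrier_mat d n. transpose_mat (M * Z) = M * Z \<and> M * Z * (M * Z) = M * Z
      \<and> (\<forall>j<k. M * Z *\<^sub>v col M j = col M j)" if "k \<le> d" for k
    using that
  proof (induction k)
    case 0
    show ?case using M by (intro bexI[of _ "0\<^sub>m d n"]) auto
  next
    case (Suc k)
    then obtain Z where Z: "Z \<in> carrier_mat d n" and "transpose_mat (M * Z) = M * Z"
      and "M * Z * (M * Z) = M * Z" and fixed: "\<forall>j<k. M * Z *\<^sub>v col M j = col M j" by auto
    then obtain Z' where Z': "Z' \<in> carrier_mat d n" "transpose_mat (M * Z') = M * Z'"
      "M * Z' * (M * Z') = M * Z'" and new: "M * Z' *\<^sub>v col M k = col M k"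
      and keep: "\<And>u. u \<in> carrier_vec n \<Longrightarrow> M * Z *\<^sub>v u = u \<Longrightarrow> M * Z' *\<^sub>v u = u"
      using column_projector_extend[OF M] Suc.prems by (metis Suc_le_lessD)
    have "M * Z' *\<^sub>v col M j = col M j" if "j < Suc k" for j
    proof (cases "j = k")
      case False
      then show ?thesis using that M fixed by (intro keep) auto
    qed (use new in simp)
    then show ?case using Z' by blast
  qed
  then obtain Z where Z: "Z \<in> carrier_mat d n" and sym: "transpose_mat (M * Z) = M * Z"
    and fixed: "\<forall>j<d. M * Z *\<^sub>v col M j = col M j" by blast
  have "M * Z * M = M"
  proof (rule mat_col_eqI)
    fix j assume "j < dim_col M"
    then show "col (M * Z * M) j = col M j"
      using M Z fixed by (subst col_mult2[of _ n n _ d]) auto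
  qed (use M Z in auto)
  then show thesis using that Z sym by blast
qed

lemma lsq_inverse_mult_unique:
  fixes M :: "'a :: comm_ring_1 mat"
  assumes M: "M \<in> carrier_mat n d" and X: "X \<in> carrier_mat d n" and Y: "Y \<in> carrier_mat d n"
    and MXM: "M * X * M = M" and MYM: "M * Y * M = M"
    and X_sym: "transpose_mat (M * X) = M * X" and Y_sym: "transpose_mat (M * Y) = M * Y"
  shows "M * X = M * Y"
proof -
  have "M * X = M * Y * (M * X)"
    using assoc_mult_mat[of "M * Y" n n M d X n] M X Y MYM by simp
  also have "\<dots> = transpose_mat (M * X * (M * Y))"
    using M X Y X_sym Y_sym by (simp add: transpose_mult[of "M * X" n n "M * Y" n])
  also have "M * X * (M * Y) = M * Y"
    using assoc_mult_mat[of "M * X" n n M d Y n] M X Y MXM by simp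
  finally show ?thesis using Y_sym by simp
qed

definition is_pinv :: "'a :: comm_ring_1 mat \<Rightarrow> 'a mat \<Rightarrow> bool" where
  "is_pinv M X \<longleftrightarrow> X \<in> carrier_mat (dim_col M) (dim_row M) \<and>
      M * X * M = M \<and> X * M * X = X \<and>
      transpose_mat (M * X) = M * X \<and> transpose_mat (X * M) = X * M"

lemma is_pinv_transpose:
  assumes M: "M \<in> carrier_mat n d" and X: "is_pinv M X"
  shows "is_pinv (transpose_mat M) (transpose_mat X)"
proof -
  have Xc: "X \<in> carrier_mat d n" using M X by (simp add: is_pinv_def)
  have "transpose_mat M * transpose_mat X = transpose_mat (X * M)"
    and "transpose_mat X * transpose_mat M = transpose_mat (M * X)"
    using M Xc by (simp_all add: transpose_mult)
  moreover have "transpose_mat M * transpose_mat X * transpose_mat M = transpose_mat (M * X * M)"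
    and "transpose_mat X * transpose_mat M * transpose_mat X = transpose_mat (X * M * X)"
    by (rule transpose_mult_mult[OF M Xc M, symmetric],
        rule transpose_mult_mult[OF Xc M Xc, symmetric])
  ultimately show ?thesis using M Xc X by (simp add: is_pinv_def)
qed

lemma is_pinv_unique:
  assumes M: "M \<in> carrier_mat n d" and X: "is_pinv M X" and Y: "is_pinv M Y"
  shows "X = Y"
proof -
  have Xc: "X \<in> carrier_mat d n" and Yc: "Y \<in> carrier_mat d n"
    using M X Y by (simp_all add: is_pinv_def)
  have MX: "M * X = M * Y"
    using lsq_inverse_mult_unique[OF M Xc Yc] X Y by (simp add: is_pinv_def)
  have "transpose_mat M * transpose_mat X = transpose_mat M * transpose_mat Y"
    by (rule lsq_inverse_mult_unique[of _ d n])
      (use is_pinv_transpose[OF M X] is_pinv_transpose[OF M Y] M Xc Yc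
        in \<open>auto simp: is_pinv_def\<close>)
  then have "transpose_mat (X * M) = transpose_mat (Y * M)"
    using M Xc Yc by (simp add: transpose_mult)
  then have XM: "X * M = Y * M" by simp
  have "X = X * M * X" using X by (simp add: is_pinv_def)
  also have "\<dots> = Y * M * Y"
    using M Xc Yc MX XM by (simp add: assoc_mult_mat[of X d n M d X n])
  also have "\<dots> = Y" using Y by (simp add: is_pinv_def)
  finally show ?thesis .
qed

lemma is_pinv_exists:
  fixes M :: "real mat"
  assumes M: "M \<in> carrier_mat n d"
  obtains X where "is_pinv M X"
proof -
  obtain Z where Z: "Z \<in> carrier_mat d n" and MZM: "M * Z * M = M"
    and MZ_sym: "transpose_mat (M * Z) = M * Z"
    using lsq_inverse_exists[OF M] by blast
  have Mt: "transpose_mat M \<in> carrier_mat d n" using M by simp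
  obtain W where W: "W \<in> carrier_mat n d"
    and MWM: "transpose_mat M * W * transpose_mat M = transpose_mat M"
    and MW_sym: "transpose_mat (transpose_mat M * W) = transpose_mat M * W"
    using lsq_inverse_exists[OF Mt] by blast
  (* Urquhart's formula: Y M Z is the Moore-Penrose inverse for the {1,4}-inverse Y = W^T *)
  define Y where "Y = transpose_mat W"
  have Y: "Y \<in> carrier_mat d n" using W by (simp add: Y_def)
  have MYM: "M * Y * M = M"
    using arg_cong[OF MWM, of transpose_mat] transpose_mult_mult[OF Mt W Mt] by (simp add: Y_def)
  have YM_sym: "transpose_mat (Y * M) = Y * M"
    using MW_sym M W by (simp add: Y_def transpose_mult)
  have YM: "Y * M \<in> carrier_mat d d" and ZM: "Z * M \<in> carrier_mat d d"
    and X: "Y * M * Z \<in> carrier_mat d n" using M Y Z by auto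
  have MX: "M * (Y * M * Z) = M * Z"
    by (simp only: assoc_mult_mat[OF M YM Z, symmetric] assoc_mult_mat[OF M Y M, symmetric] MYM)
  have XM: "Y * M * Z * M = Y * M"
    by (simp only: assoc_mult_mat[OF YM Z M] assoc_mult_mat[OF Y M ZM]
        assoc_mult_mat[OF M Z M, symmetric] MZM)
  have "is_pinv M (Y * M * Z)"
    unfolding is_pinv_def
  proof (intro conjI)
    show "Y * M * Z \<in> carrier_mat (dim_col M) (dim_row M)" using M X by simp
    show "M * (Y * M * Z) * M = M" using MX MZM by simp
    show "Y * M * Z * M * (Y * M * Z) = Y * M * Z"
      by (simp only: XM assoc_mult_mat[OF Y M X] MX assoc_mult_mat[OF Y M Z, symmetric])
    show "transpose_mat (M * (Y * M * Z)) = M * (Y * M * Z)" using MX MZ_sym by simp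
    show "transpose_mat (Y * M * Z * M) = Y * M * Z * M" using XM YM_sym by simp
  qed
  then show thesis by (rule that)
qed

lemma pinv_eq_The_is_pinv: "pinv M = (THE X. is_pinv M X)"
  unfolding pinv_def is_pinv_def ..

lemma pinv_eqI:
  assumes M: "M \<in> carrier_mat n d" and X: "is_pinv M X"
  shows "pinv M = X"
  unfolding pinv_eq_The_is_pinv
  by (rule the_equality[where P = "is_pinv M", OF X is_pinv_unique[OF M _ X]])

lemma is_pinv_pinv: "M \<in> carrier_mat n d \<Longrightarrow> is_pinv M (pinv M)"
  by (metis is_pinv_exists pinv_eqI)

lemma pinv_carrier: "M \<in> carrier_mat n d \<Longrightarrow> pinv M \<in> carrier_mat d n"
  using is_pinv_pinv by (fastforce simp: is_pinv_def)

lemma pinv_transpose: "M \<in> carrier_mat n d \<Longrightarrow> pinv (transpose_mat M) = transpose_mat (pinv M)"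
  by (simp add: pinv_eqI[of _ d n] is_pinv_transpose is_pinv_pinv)

section \<open>Transposing the projections\<close>

lemma submatrix_transpose: "submatrix (transpose_mat A) I J = transpose_mat (submatrix A J I)"
  unfolding submatrix_def by (intro eq_matI) (simp_all add: pick_le)

lemma dim_submatrix_all:
  "dim_row (submatrix A {0..<dim_row A} J) = dim_row A"
  "dim_col (submatrix A I {0..<dim_col A}) = dim_col A"
proof -
  have "{i. i < n \<and> i \<in> {0..<n}} = {0..<n}" for n :: nat by auto
  then show "dim_row (submatrix A {0..<dim_row A} J) = dim_row A"
    and "dim_col (submatrix A I {0..<dim_col A}) = dim_col A"
    by (simp_all add: dim_submatrix)
qed

lemma submatrix_all_rows_carrier:
  "submatrix A {0..<dim_row A} J \<in> carrier_mat (dim_row A) (dim_col (submatrix A {0..<dim_row A} J))"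
  by (rule carrier_matI) (simp_all only: dim_submatrix_all)

lemma submatrix_all_cols_carrier:
  "submatrix A I {0..<dim_col A} \<in> carrier_mat (dim_row (submatrix A I {0..<dim_col A})) (dim_col A)"
  by (rule carrier_matI) (simp_all only: dim_submatrix_all)

lemma Qproj_carrier: "Qproj B S \<in> carrier_mat (dim_row B) (dim_row B)"
proof -
  let ?BS = "submatrix B {0..<dim_row B} S"
  have "?BS * pinv ?BS \<in> carrier_mat (dim_row B) (dim_row B)"
    using submatrix_all_rows_carrier pinv_carrier[OF submatrix_all_rows_carrier]
    by (rule mult_carrier_mat)
  then show ?thesis unfolding Qproj_def Let_def by (rule minus_carrier_mat)
qed

lemma Pproj_carrier: "Pproj C R \<in> carrier_mat (dim_col C) (dim_col C)"
proof -
  let ?CR = "submatrix C R {0..<dim_col C}"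
  have "pinv ?CR * ?CR \<in> carrier_mat (dim_col C) (dim_col C)"
    using pinv_carrier[OF submatrix_all_cols_carrier] submatrix_all_cols_carrier
    by (rule mult_carrier_mat)
  then show ?thesis unfolding Pproj_def Let_def by (rule minus_carrier_mat)
qed

lemma Qproj_transpose: "Qproj (transpose_mat C) R = transpose_mat (Pproj C R)"
proof -
  define CR where "CR = submatrix C R {0..<dim_col C}"
  have CR: "CR \<in> carrier_mat (dim_row CR) (dim_col C)"
    unfolding CR_def by (rule submatrix_all_cols_carrier)
  have CR_pinv: "pinv CR * CR \<in> carrier_mat (dim_col C) (dim_col C)"
    using pinv_carrier[OF CR] CR by (rule mult_carrier_mat)
  have "Qproj (transpose_mat C) R
      = 1\<^sub>m (dim_col C) - transpose_mat CR * pinv (transpose_mat CR)"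
    unfolding Qproj_def Let_def CR_def by (simp only: submatrix_transpose index_transpose_mat)
  also have "\<dots> = 1\<^sub>m (dim_col C) - transpose_mat (pinv CR * CR)"
    by (simp only: pinv_transpose[OF CR] transpose_mult[OF pinv_carrier[OF CR] CR])
  also have "\<dots> = transpose_mat (1\<^sub>m (dim_col C) - pinv CR * CR)"
    by (simp only: transpose_minus[OF one_carrier_mat CR_pinv] transpose_one)
  finally show ?thesis unfolding Pproj_def Let_def CR_def .
qed

lemma Pproj_transpose: "Pproj (transpose_mat B) S = transpose_mat (Qproj B S)"
  using arg_cong[OF Qproj_transpose[of "transpose_mat B" S], of transpose_mat]
  by (simp only: transpose_transpose)

lemma pSR_transpose:
  assumes A: "A \<in> carrier_mat n d" and B: "dim_row B = n" and C: "dim_col C = d" and x: "x \<noteq> 0"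
  shows "pSR S R x A B C
    = x powi (int d - int n) * pSR R S x (transpose_mat A) (transpose_mat C) (transpose_mat B)"
proof -
  define M where "M = Qproj B S * A * Pproj C R"
  have Q: "Qproj B S \<in> carrier_mat n n" and P: "Pproj C R \<in> carrier_mat d d"
    using Qproj_carrier[of B S] Pproj_carrier[of C R] B C by simp_all
  have M: "M \<in> carrier_mat n d" using Q A P by (simp add: M_def)
  have "Qproj (transpose_mat C) R * transpose_mat A * Pproj (transpose_mat B) S = transpose_mat M"
    unfolding M_def Qproj_transpose Pproj_transpose
    by (rule transpose_mult_mult[OF Q A P, symmetric])
  then have "pSR R S x (transpose_mat A) (transpose_mat C) (transpose_mat B)
      = det (x \<cdot>\<^sub>m 1\<^sub>m n - M * transpose_mat M)"
    using A by (simp add: pSR_def Let_def)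
  moreover have "pSR S R x A B C = det (x \<cdot>\<^sub>m 1\<^sub>m d - transpose_mat M * M)"
    using A by (simp add: pSR_def Let_def M_def)
  ultimately show ?thesis
    using det_smult_one_minus_mult_commute[OF M transpose_carrier_mat[THEN iffD2, OF M] x] by simp
qed

theorem proposition3p1:
  fixes A B C :: "real mat" and n d dB nC k r :: nat and x :: real
  assumes "A \<in> carrier_mat n d" and "B \<in> carrier_mat n dB" and "C \<in> carrier_mat nC d"
    and "1 \<le> k" and "k \<le> dB" and "1 \<le> r" and "r \<le> nC"
    and "x \<noteq> 0"
  shows "Pkr k r x A B C =
    x powi (int d - int n) * Pkr r k x (transpose_mat A) (transpose_mat C) (transpose_mat B)"
proof -
  have dims: "dim_row B = n" "dim_col B = dB" "dim_row C = nC" "dim_col C = d"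
    using assms(2,3) by auto
  define wB where "wB S = det (transpose_mat (submatrix B {0..<n} S) * submatrix B {0..<n} S)" for S
  define wC where "wC R = det (submatrix C R {0..<d} * transpose_mat (submatrix C R {0..<d}))" for R
  let ?Ss = "{S. S \<subseteq> {0..<dB} \<and> card S = k}" and ?Rs = "{R. R \<subseteq> {0..<nC} \<and> card R = r}"
  let ?c = "x powi (int d - int n)"
    and ?p = "\<lambda>S R. pSR R S x (transpose_mat A) (transpose_mat C) (transpose_mat B)"
  have "Pkr k r x A B C = (\<Sum>R\<in>?Rs. \<Sum>S\<in>?Ss. ?c * (wB S * wC R * ?p S R))"
    unfolding Pkr_def dims wB_def wC_def pSR_transpose[OF assms(1) dims(1) dims(4) assms(8)]
    by (simp add: ac_simps)
  also have "\<dots> = ?c * (\<Sum>S\<in>?Ss. \<Sum>R\<in>?Rs. wB S * wC R * ?p S R)"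
    by (subst sum.swap) (simp add: sum_distrib_left)
  also have "(\<Sum>S\<in>?Ss. \<Sum>R\<in>?Rs. wB S * wC R * ?p S R)
      = Pkr r k x (transpose_mat A) (transpose_mat C) (transpose_mat B)"
    unfolding Pkr_def index_transpose_mat dims wB_def wC_def submatrix_transpose transpose_transpose
    ..
  finally show ?thesis .
qed

end
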